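(* Let $\epsilon\in(0,1)$ and let $\ell\ge 0$ be an integer. Set $$m=\left\lceil \log_2\!\left(\left\lceil 175\left(\ln(10/\epsilon)+1\right)^2\right\rceil+1\right)\right\rceil+1,\qquad N=2^{\ell+m},\qquad K=2^{m-1}-1 .$$ Then the largest eigenvalue $\lambda_{\max}$ of the $N\times N$ DPSS kernel $C_{N,K}$ satisfies $\lambda_{\max}\ge 1-\epsilon$. Equivalently, the DPSS taper $\phi$ (a unit eigenvector of $C_{N,K}$ for $\lambda_{\max}$) has average success probability $\bar P_K(\phi)\ge 1-\epsilon$, i.e. the tapered phase-estimation procedure with this taper outputs one of the $2K+1=2^m-1$ grid estimates $k/N$ closest to the true phase with average probability at least $1-\epsilon$.
   Context: For $N\in\mathbb N$, a taper is a unit vector $\phi=(\phi[0],\dots,\phi[N-1])\in\mathbb C^N$, with discrete-time Fourier transform $\hat\phi(f)=N^{-1/2}\sum_{n=0}^{N-1}\phi[n]e^{2\pi i n f}$ for $f\in\mathbb R$. For an integer $K\ge0$ with $2K+1\le N$ and $\Delta\in\mathbb R$, the success probability is $P_{K,\Delta}(\phi)=\sum_{j=-K}^{K}|\hat\phi(\Delta+j/N)|^2$, and the average success probability is $\bar P_K(\phi)=N\int_{-1/(2N)}^{1/(2N)}P_{K,\Delta}(\phi)\,d\Delta$ (the expectation over $\Delta$ uniform on $[-\tfrac1{2N},\tfrac1{2N}]$). The DPSS kernel $C_{N,K}$ is the real symmetric $N\times N$ matrix indexed by $m,n\in\{0,\dots,N-1\}$ with $C_{N,K}[m,n]=\frac{\sin(\pi(m-n)(2K+1)/N)}{\pi(m-n)}$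 for $m\ne n$ and $C_{N,K}[m,m]=(2K+1)/N$. Here $\ln$ is the natural logarithm. *)

theory Defs
  imports Complex_Main "Jordan_Normal_Form.Char_Poly"
begin

definition dpss_kernel :: "nat \<Rightarrow> nat \<Rightarrow> real mat" where
  "dpss_kernel N K = mat N N (\<lambda>(m, n).
     if m = n then (2 * real K + 1) / real N
     else sin (pi * (real m - real n) * (2 * real K + 1) / real N) / (pi * (real m - real n)))"

definition lambda_max :: "real mat \<Rightarrow> real" where
  "lambda_max A = Max {lam. eigenvalue A lam}"

end

theory Submission
  imports Defs "HOL-Analysis.Function_Topology" "HOL-Analysis.Convex"
begin

text \<open>
  Since the kernel \<open>C\<close> is symmetric, its largest eigenvalue dominates the Rayleigh quotient
  \<open>x\<^sup>T C x / x\<^sup>T x\<close> of every nonzero vector. For \<open>N = p M\<close> and \<open>K = 2p - 1\<close> take for \<open>x\<close> the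
  coefficients of \<open>(1 + z + \<dots> + z\<^bsup>M-1\<^esup>)\<^sup>p\<close>, and let \<open>W = (2K + 1) / N\<close> and
  \<open>X(f) = \<Sum>\<^sub>n x\<^sub>n e\<^bsup>2\<pi>inf\<^esup>\<close>. Then \<open>x\<^sup>T x - x\<^sup>T C x\<close> is twice the integral of \<open>|X(f)|\<^sup>2\<close>
  over \<open>[W/2, 1/2]\<close>, and the Dirichlet kernel bound \<open>|X(f)| \<le> (2f)\<^bsup>-p\<^esup>\<close> makes it at most
  \<open>1 / ((2p - 1) W\<^bsup>2p-1\<^esup>)\<close>, whereas \<open>x\<^sup>T x \<ge> M\<^bsup>2p\<^esup> / N\<close> by Cauchy--Schwarz because the
  coefficients sum to \<open>M\<^sup>p\<close>. Since \<open>MW \<ge> 2\<close>, the Rayleigh quotient is at least \<open>1 - 2\<^bsup>-K\<^esup>\<close>,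
  and the choice of \<open>m\<close> makes \<open>2\<^bsup>-K\<^esup> \<le> \<epsilon>\<close>.
\<close>

section \<open>Rayleigh quotients\<close>

definition sprod :: "nat \<Rightarrow> (nat \<Rightarrow> real) \<Rightarrow> (nat \<Rightarrow> real) \<Rightarrow> real" where
  "sprod n x z = (\<Sum>i<n. x i * z i)"

definition bilin :: "nat \<Rightarrow> (nat \<Rightarrow> nat \<Rightarrow> real) \<Rightarrow> (nat \<Rightarrow> real) \<Rightarrow> (nat \<Rightarrow> real) \<Rightarrow> real" where
  "bilin n a x z = (\<Sum>i<n. \<Sum>j<n. a i j * x i * z j)"

lemma sprod_self_nonneg: "0 \<le> sprod n x x"
  unfolding sprod_def by (intro sum_nonneg) auto

lemma sprod_self_eq_0D: "sprod n x x = 0 \<Longrightarrow> i < n \<Longrightarrow> x i = 0"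
  unfolding sprod_def by (subst (asm) sum_nonneg_eq_0_iff) auto

lemma sprod_scale: "sprod n (\<lambda>i. c * x i) (\<lambda>i. c * x i) = c\<^sup>2 * sprod n x x"
  unfolding sprod_def by (simp add: sum_distrib_left power2_eq_square mult_ac)

lemma bilin_scale: "bilin n a (\<lambda>i. c * x i) (\<lambda>i. c * x i) = c\<^sup>2 * bilin n a x x"
  unfolding bilin_def by (simp add: sum_distrib_left power2_eq_square mult_ac)

lemma sprod_cong: "(\<And>i. i < n \<Longrightarrow> x i = x' i) \<Longrightarrow> sprod n x x = sprod n x' x'"
  unfolding sprod_def by (intro sum.cong refl) auto

lemma bilin_cong: "(\<And>i. i < n \<Longrightarrow> x i = x' i) \<Longrightarrow> bilin n a x x = bilin n a x' x'"
  unfolding bilin_def by (intro sum.cong refl) auto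

lemma sprod_add_scaled:
  "sprod n (\<lambda>i. x i + t * z i) (\<lambda>i. x i + t * z i)
   = sprod n x x + 2 * t * sprod n x z + t\<^sup>2 * sprod n z z"
proof -
  have "\<And>i. (x i + t * z i) * (x i + t * z i) = x i * x i + 2 * t * (x i * z i) + t\<^sup>2 * (z i * z i)"
    by (simp add: algebra_simps power2_eq_square)
  then show ?thesis
    unfolding sprod_def by (simp add: sum.distrib sum_distrib_left)
qed

lemma bilin_add_scaled:
  "bilin n a (\<lambda>i. x i + t * z i) (\<lambda>i. x i + t * z i)
   = bilin n a x x + t * bilin n a x z + t * bilin n a z x + t\<^sup>2 * bilin n a z z"
proof -
  have "\<And>i j. a i j * (x i + t * z i) * (x j + t * z j)
      = a i j * x i * x j + t * (a i j * x i * z j) + t * (a i j * z i * x j) + t\<^sup>2 * (a i j * z i * z j)"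
    by (simp add: algebra_simps power2_eq_square)
  then show ?thesis
    unfolding bilin_def by (simp add: sum.distrib sum_distrib_left)
qed

lemma bilin_eq_sum_row:
  assumes "\<forall>i<n. \<forall>j<n. a i j = a j i"
  shows "bilin n a y w = (\<Sum>j<n. w j * (\<Sum>i<n. a j i * y i))"
proof -
  have "bilin n a y w = (\<Sum>j<n. \<Sum>i<n. a i j * y i * w j)"
    unfolding bilin_def by (rule sum.swap)
  also have "\<dots> = (\<Sum>j<n. w j * (\<Sum>i<n. a j i * y i))"
    by (intro sum.cong refl) (use assms in \<open>auto simp: mult_ac sum_distrib_left\<close>)
  finally show ?thesis .
qed

lemma bilin_commute:
  assumes "\<forall>i<n. \<forall>j<n. a i j = a j i"
  shows "bilin n a z x = bilin n a x z"
proof -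
  have "bilin n a z x = (\<Sum>j<n. \<Sum>i<n. a i j * z i * x j)"
    unfolding bilin_def by (rule sum.swap)
  also have "\<dots> = bilin n a x z"
    unfolding bilin_def by (intro sum.cong refl) (use assms in \<open>auto simp: mult_ac\<close>)
  finally show ?thesis .
qed

lemma abs_le_1_of_sprod_eq_1:
  assumes "sprod n z z = 1" and "i < n"
  shows "\<bar>z i\<bar> \<le> 1"
proof -
  have "(z i)\<^sup>2 \<le> sprod n z z"
    unfolding sprod_def power2_eq_square using assms(2) by (intro member_le_sum) auto
  then show ?thesis
    using assms(1) abs_le_square_iff[of "z i" 1] by simp
qed

lemma compact_unit_sphere_upto:
  "compact {x::nat \<Rightarrow> real. (\<forall>i\<ge>n. x i = 0) \<and> sprod n x x = 1}"
proof -
  let ?T = "\<lambda>i::nat. if i < n then {-1..1::real} else {0}"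
  have "compactin (product_topology (\<lambda>_. euclidean) UNIV) (PiE UNIV ?T)"
    by (subst compactin_PiE) auto
  then have box: "compact (PiE UNIV ?T)"
    by (simp add: euclidean_product_topology)
  have "continuous_on UNIV (\<lambda>x::nat \<Rightarrow> real. sprod n x x)"
    unfolding sprod_def by (intro continuous_intros continuous_on_product_coordinates)
  then have sphere: "closed {x::nat \<Rightarrow> real. sprod n x x = 1}"
    using closed_Collect_eq[of "\<lambda>x. sprod n x x" "\<lambda>_. 1"] by simp
  have "{x. (\<forall>i\<ge>n. x i = 0) \<and> sprod n x x = 1} = PiE UNIV ?T \<inter> {x. sprod n x x = 1}"
    using abs_le_1_of_sprod_eq_1 by (auto simp: PiE_def Pi_def abs_le_iff not_less)
  then show ?thesis
    using compact_Int_closed[OF box sphere] by simp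
qed

lemma bilin_le_mult_sprod_of_unit:
  assumes unit: "\<And>z. sprod n z z = 1 \<Longrightarrow> bilin n a z z \<le> c"
  shows "bilin n a x x \<le> c * sprod n x x"
proof (cases "sprod n x x = 0")
  case True
  then have "bilin n a x x = bilin n a (\<lambda>_. 0) (\<lambda>_. 0)"
    using sprod_self_eq_0D by (intro bilin_cong) auto
  then show ?thesis
    using True by (simp add: bilin_def)
next
  case False
  define s where "s = sqrt (sprod n x x)"
  have s: "0 < s" "s\<^sup>2 = sprod n x x"
    using False sprod_self_nonneg[of n x] unfolding s_def by auto
  define z where "z i = (1 / s) * x i" for i
  have "sprod n z z = (1 / s)\<^sup>2 * sprod n x x"
    unfolding z_def by (rule sprod_scale)
  then have "sprod n z z = 1"
    using s False by (simp add: power_divide)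
  moreover have "bilin n a z z = (1 / s)\<^sup>2 * bilin n a x x"
    unfolding z_def by (rule bilin_scale)
  then have "bilin n a x x = s\<^sup>2 * bilin n a z z"
    using s False by (simp add: power_divide)
  ultimately have "bilin n a x x \<le> s\<^sup>2 * c"
    using unit by (simp add: mult_left_mono)
  then show ?thesis
    using s by (simp add: mult.commute)
qed

lemma bilin_attains_max_ratio:
  assumes "0 < n"
  shows "\<exists>y. sprod n y y = 1 \<and> (\<forall>x. bilin n a x x \<le> bilin n a y y * sprod n x x)"
proof -
  define S where "S = {x::nat \<Rightarrow> real. (\<forall>i\<ge>n. x i = 0) \<and> sprod n x x = 1}"
  have "(\<lambda>i. if i = 0 then 1 else 0) \<in> S"
    unfolding S_def sprod_def using assms by (auto simp: if_distrib[where f="\<lambda>x. x * _"] cong: if_cong)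
  moreover have "continuous_on UNIV (\<lambda>x. bilin n a x x)"
    unfolding bilin_def by (intro continuous_intros continuous_on_product_coordinates)
  ultimately obtain y where yS: "y \<in> S" and ymax: "\<And>z. z \<in> S \<Longrightarrow> bilin n a z z \<le> bilin n a y y"
    using continuous_attains_sup[of S] continuous_on_subset compact_unit_sphere_upto
    unfolding S_def by (metis (no_types, lifting) empty_iff subset_UNIV)
  have "bilin n a z z \<le> bilin n a y y" if "sprod n z z = 1" for z
  proof -
    define z' where "z' i = (if i < n then z i else 0)" for i
    have "bilin n a z' z' = bilin n a z z" and "sprod n z' z' = 1"
      using that sprod_cong[of n z' z] bilin_cong[of n z' z] unfolding z'_def by auto
    moreover have "z' \<in> S"
      using \<open>sprod n z' z' = 1\<close> unfolding S_def z'_def by auto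
    ultimately show ?thesis
      using ymax[of z'] by simp
  qed
  then show ?thesis
    using yS bilin_le_mult_sprod_of_unit unfolding S_def by blast
qed

text \<open>First-order optimality: perturbing \<open>y\<close> along the residual \<open>w = Ay - \<mu>y\<close> gives
  \<open>2t|w|\<^sup>2 \<le> O(t\<^sup>2)\<close> for all \<open>t\<close>, which forces \<open>w = 0\<close>.\<close>
lemma rayleigh_maximizer_is_eigenvector:
  assumes sym: "\<forall>i<n. \<forall>j<n. a i j = a j i"
    and max: "\<And>x. bilin n a x x \<le> \<mu> * sprod n x x"
    and y: "bilin n a y y = \<mu> * sprod n y y"
  shows "\<forall>j<n. (\<Sum>i<n. a j i * y i) = \<mu> * y j"
proof -
  define w where "w j = (\<Sum>i<n. a j i * y i) - \<mu> * y j" for j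
  have yw: "bilin n a y w = sprod n w w + \<mu> * sprod n y w"
  proof -
    have "bilin n a y w = (\<Sum>j<n. w j * w j + \<mu> * (y j * w j))"
      unfolding bilin_eq_sum_row[OF sym] by (intro sum.cong refl) (simp add: w_def algebra_simps)
    then show ?thesis
      unfolding sprod_def by (simp add: sum.distrib sum_distrib_left)
  qed
  define D where "D = \<mu> * sprod n w w - bilin n a w w"
  have perturb: "2 * t * sprod n w w \<le> t\<^sup>2 * D" for t
    using max[of "\<lambda>i. y i + t * w i"]
    unfolding bilin_add_scaled sprod_add_scaled bilin_commute[OF sym, of w y] yw y D_def
    by (simp add: algebra_simps)
  have "sprod n w w = 0"
  proof (rule ccontr)
    assume "sprod n w w \<noteq> 0"
    then have w: "0 < sprod n w w"
      using sprod_self_nonneg[of n w] by linarith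
    have D: "0 \<le> D"
      using max[of w] unfolding D_def by simp
    define t where "t = sprod n w w / (D + 1)"
    have t: "0 < t"
      unfolding t_def using w D by simp
    have "2 * sprod n w w \<le> t * D"
      using perturb[of t] t by (simp add: power2_eq_square)
    also have "\<dots> = sprod n w w * D / (D + 1)"
      unfolding t_def by simp
    also have "\<dots> \<le> sprod n w w"
      using D w by (simp add: divide_le_eq algebra_simps)
    finally show False
      using w by simp
  qed
  then show ?thesis
    using sprod_self_eq_0D unfolding w_def by fastforce
qed

lemma lambda_max_ge_eigenvalue:
  assumes "(A::real mat) \<in> carrier_mat n n" and "eigenvalue A \<mu>"
  shows "\<mu> \<le> lambda_max A"
proof -
  have "char_poly A \<noteq> 0"
    using degree_monic_char_poly[OF assms(1)] by auto
  then have "finite {lam. poly (char_poly A) lam = 0}"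
    by (rule poly_roots_finite)
  then have "finite {lam. eigenvalue A lam}"
    using eigenvalue_root_char_poly[OF assms(1)] by simp
  then show ?thesis
    unfolding lambda_max_def using assms(2) by (intro Max_ge) auto
qed

lemma eigenvalue_of_rows:
  assumes A: "(A::real mat) \<in> carrier_mat n n"
    and eig: "\<forall>j<n. (\<Sum>i<n. A $$ (j, i) * y i) = \<mu> * y j" and "i < n" "y i \<noteq> 0"
  shows "eigenvalue A \<mu>"
proof -
  define v where "v = Matrix.vec n y"
  have "v \<noteq> 0\<^sub>v n"
    using assms(3,4) unfolding v_def by (metis index_vec index_zero_vec(1))
  moreover have "A *\<^sub>v v = \<mu> \<cdot>\<^sub>v v"
  proof (rule eq_vecI)
    fix j
    assume "j < dim_vec (\<mu> \<cdot>\<^sub>v v)"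
    then have j: "j < n"
      unfolding v_def by simp
    have "(A *\<^sub>v v) $ j = row A j \<bullet> v"
      using A j by simp
    also have "\<dots> = (\<Sum>i<n. A $$ (j, i) * y i)"
      using A j unfolding v_def scalar_prod_def by (auto intro!: sum.cong simp: lessThan_atLeast0)
    finally show "(A *\<^sub>v v) $ j = (\<mu> \<cdot>\<^sub>v v) $ j"
      using eig j unfolding v_def by simp
  qed (use A in \<open>simp add: v_def\<close>)
  ultimately have "eigenvector A v \<mu>"
    unfolding eigenvector_def using A by (auto simp: v_def)
  then show ?thesis
    unfolding eigenvalue_def by blast
qed

lemma rayleigh_quotient_le_lambda_max:
  assumes A: "(A::real mat) \<in> carrier_mat n n"
    and sym: "\<forall>i<n. \<forall>j<n. A $$ (i, j) = A $$ (j, i)"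
    and x: "0 < sprod n x x"
  shows "bilin n (\<lambda>i j. A $$ (i, j)) x x / sprod n x x \<le> lambda_max A"
proof -
  let ?a = "\<lambda>i j. A $$ (i, j)"
  have "0 < n"
    using x unfolding sprod_def by (cases n) auto
  then obtain y where y1: "sprod n y y = 1"
    and max: "\<And>x. bilin n ?a x x \<le> bilin n ?a y y * sprod n x x"
    using bilin_attains_max_ratio by blast
  define \<mu> where "\<mu> = bilin n ?a y y"
  have "\<forall>j<n. (\<Sum>i<n. ?a j i * y i) = \<mu> * y j"
    using rayleigh_maximizer_is_eigenvector[OF sym, of \<mu> y] max y1 unfolding \<mu>_def by simp
  moreover have "\<exists>i<n. y i \<noteq> 0"
  proof (rule ccontr)
    assume "\<not> (\<exists>i<n. y i \<noteq> 0)"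
    then have "sprod n y y = 0"
      unfolding sprod_def by simp
    then show False
      using y1 by simp
  qed
  ultimately have "eigenvalue A \<mu>"
    using eigenvalue_of_rows[OF A] by blast
  then have "\<mu> \<le> lambda_max A"
    by (rule lambda_max_ge_eigenvalue[OF A])
  moreover have "bilin n ?a x x / sprod n x x \<le> \<mu>"
    using max[of x] x y1 unfolding \<mu>_def by (simp add: divide_le_eq)
  ultimately show ?thesis
    by linarith
qed

section \<open>The spectral form of the sinc kernel\<close>

definition cos_primitive :: "real \<Rightarrow> real \<Rightarrow> real" where
  "cos_primitive d f = (if d = 0 then f else sin (2 * pi * d * f) / (2 * pi * d))"

text \<open>\<open>spectral_density N x f = |\<Sum>\<^sub>n\<^sub><\<^sub>N x n e\<^bsup>2\<pi>inf\<^esup>|\<^sup>2\<close> and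
  \<open>spectral_mass N x\<close> is its primitive vanishing at \<open>0\<close>; integrals are replaced by primitives
  throughout.\<close>

definition spectral_density :: "nat \<Rightarrow> (nat \<Rightarrow> real) \<Rightarrow> real \<Rightarrow> real" where
  "spectral_density N x f = (\<Sum>i<N. \<Sum>j<N. x i * x j * cos (2 * pi * (real i - real j) * f))"

definition spectral_mass :: "nat \<Rightarrow> (nat \<Rightarrow> real) \<Rightarrow> real \<Rightarrow> real" where
  "spectral_mass N x f = (\<Sum>i<N. \<Sum>j<N. x i * x j * cos_primitive (real i - real j) f)"

definition sinc_kernel :: "real \<Rightarrow> nat \<Rightarrow> nat \<Rightarrow> real" where
  "sinc_kernel W i j =
     (if i = j then W else sin (pi * (real i - real j) * W) / (pi * (real i - real j)))"

lemma has_real_derivative_cos_primitive: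
  "(cos_primitive d has_real_derivative cos (2 * pi * d * f)) (at f)"
proof (cases "d = 0")
  case True
  then show ?thesis
    unfolding cos_primitive_def by (auto intro!: derivative_eq_intros)
next
  case False
  have "((\<lambda>f. sin (2 * pi * d * f) / (2 * pi * d)) has_real_derivative cos (2 * pi * d * f)) (at f)"
    using False by (auto intro!: derivative_eq_intros)
  then show ?thesis
    unfolding cos_primitive_def using False by simp
qed

lemma has_real_derivative_spectral_mass:
  "(spectral_mass N x has_real_derivative spectral_density N x f) (at f)"
  unfolding spectral_mass_def[abs_def] spectral_density_def
  by (intro DERIV_sum DERIV_cmult has_real_derivative_cos_primitive)

lemma spectral_mass_half: "2 * spectral_mass N x (1/2) = sprod N x x"
proof -
  have "x i * x j * cos_primitive (real i - real j) (1/2) = (if i = j then x i * x i / 2 else 0)" for i j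
  proof (cases "i = j")
    case False
    have "sin (pi * of_int (int i - int j)) = 0"
      by (rule sin_npi_int)
    then have "sin (2 * pi * (real i - real j) * (1/2)) = 0"
      by (simp add: mult.commute)
    then show ?thesis
      using False unfolding cos_primitive_def by simp
  qed (simp add: cos_primitive_def)
  then have "spectral_mass N x (1/2) = (\<Sum>i<N. x i * x i / 2)"
    unfolding spectral_mass_def by simp
  then show ?thesis
    unfolding sprod_def by (simp add: sum_divide_distrib[symmetric])
qed

lemma spectral_mass_bandwidth: "2 * spectral_mass N x (W/2) = bilin N (sinc_kernel W) x x"
proof -
  have pointwise: "2 * (x i * x j * cos_primitive (real i - real j) (W/2)) = sinc_kernel W i j * x i * x j" for i j
  proof (cases "i = j")
    case False
    then have d: "real i - real j \<noteq> 0"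
      by simp
    have half: "2 * pi * (real i - real j) * (W/2) = pi * (real i - real j) * W"
      by simp
    have "cos_primitive (real i - real j) (W/2)
        = sin (pi * (real i - real j) * W) / (2 * pi * (real i - real j))"
      unfolding cos_primitive_def half using d by simp
    moreover obtain s where "sin (pi * (real i - real j) * W) = s"
      by blast
    ultimately show ?thesis
      using False d unfolding sinc_kernel_def by (simp add: field_simps)
  qed (simp add: cos_primitive_def sinc_kernel_def)
  show ?thesis
    unfolding spectral_mass_def bilin_def by (simp only: sum_distrib_left pointwise)
qed

lemma spectral_density_eq_norm:
  "spectral_density N x f = (cmod (\<Sum>n<N. of_real (x n) * cis (2 * pi * f) ^ n))\<^sup>2"
proof -
  let ?z = "cis (2 * pi * f)"
  have "of_real (x i) * ?z ^ i * cnj (of_real (x j) * ?z ^ j)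
      = of_real (x i * x j) * cis (2 * pi * (real i - real j) * f)" for i j
  proof -
    have "?z ^ i * cnj (?z ^ j) = cis (2 * pi * (real i - real j) * f)"
      by (simp add: DeMoivre cis_cnj cis_mult algebra_simps)
    then show ?thesis
      by (simp add: algebra_simps)
  qed
  then have product: "(\<Sum>n<N. of_real (x n) * ?z ^ n) * cnj (\<Sum>n<N. of_real (x n) * ?z ^ n)
      = (\<Sum>i<N. \<Sum>j<N. of_real (x i * x j) * cis (2 * pi * (real i - real j) * f))"
    by (simp only: sum_product cnj_sum)
  have norm_sq: "(cmod v)\<^sup>2 = Re (v * cnj v)" for v
    by (subst cmod_power2) (simp add: power2_eq_square)
  show ?thesis
    unfolding norm_sq product spectral_density_def by (simp add: Re_sum)
qed

lemma has_real_derivative_neg_inverse_power: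
  assumes "0 < f" and "1 \<le> k"
  shows "((\<lambda>f. - c / f ^ k) has_real_derivative c * real k / f ^ (k + 1)) (at f)"
proof -
  have "(k - 1) + (k + 1) = k + k"
    using assms(2) by simp
  then have "f ^ k * f ^ k = f ^ (k - 1) * f ^ (k + 1)"
    by (simp only: power_add[symmetric])
  then have "- (- c * (real k * f ^ (k - 1)) / (f ^ k * f ^ k)) = c * real k / f ^ (k + 1)"
    using assms(1) by (simp add: field_simps)
  moreover have "((\<lambda>f. - c / f ^ k) has_real_derivative - (- c * (real k * f ^ (k - 1)) / (f ^ k * f ^ k))) (at f)"
    using assms(1) by (auto intro!: derivative_eq_intros)
  ultimately show ?thesis
    by simp
qed

text \<open>The left-hand side is the out-of-band energy \<open>2 \<integral>\<^bsub>W/2\<^esub>\<^bsup>1/2\<^esup> |X(f)|\<^sup>2 df\<close>; comparing it with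
  \<open>2 \<integral>\<^bsub>W/2\<^esub>\<^bsup>1/2\<^esup> (2f)\<^bsup>-2p\<^esup> df\<close> amounts to monotonicity of the difference of the primitives.\<close>
lemma sprod_minus_sinc_form_le:
  assumes W: "0 < W" "W \<le> 1" and p: "1 \<le> p"
    and density: "\<And>f. W/2 \<le> f \<Longrightarrow> f \<le> 1/2 \<Longrightarrow> spectral_density N x f \<le> (1 / (2 * f)) ^ (2 * p)"
  shows "sprod N x x - bilin N (sinc_kernel W) x x \<le> 1 / (real (2 * p - 1) * W ^ (2 * p - 1))"
proof -
  define k where "k = 2 * p - 1"
  have k: "1 \<le> k" "k + 1 = 2 * p"
    using p unfolding k_def by auto
  define c where "c = 1 / (real k * 4 ^ p)"
  define G where "G f = - c / f ^ k - spectral_mass N x f" for f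
  have "G (W/2) \<le> G (1/2)"
  proof (rule DERIV_nonneg_imp_nondecreasing[of "W/2" "1/2" G])
    fix f
    assume f: "W/2 \<le> f" "f \<le> 1/2"
    then have "0 < f"
      using W by simp
    have "c * real k / f ^ (k + 1) = (1 / (2 * f)) ^ (2 * p)"
      unfolding c_def k(2) using k(1) \<open>0 < f\<close> by (simp add: power_divide power_mult power_mult_distrib)
    moreover have "(G has_real_derivative c * real k / f ^ (k + 1) - spectral_density N x f) (at f)"
      unfolding G_def[abs_def]
      by (intro DERIV_diff has_real_derivative_neg_inverse_power has_real_derivative_spectral_mass \<open>0 < f\<close> k)
    ultimately show "\<exists>y. (G has_real_derivative y) (at f) \<and> 0 \<le> y"
      using density[OF f] by auto
  qed (use W in simp)
  moreover have "c / (1/2) ^ k \<ge> 0"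
    unfolding c_def by simp
  ultimately have "2 * spectral_mass N x (1/2) - 2 * spectral_mass N x (W/2) \<le> 2 * c / (W/2) ^ k"
    unfolding G_def by simp
  also have "2 * c / (W/2) ^ k = 1 / (real k * W ^ k)"
  proof -
    have "(4::real) ^ p = 2 * 2 ^ k"
      using k(2) by (metis power_Suc power_mult Suc_eq_plus1 mult.commute numeral_Bit0 mult_2 power2_eq_square)
    then show ?thesis
      unfolding c_def using W by (simp add: power_divide field_simps)
  qed
  finally show ?thesis
    using spectral_mass_half[of N x] spectral_mass_bandwidth[of N x W] unfolding k_def by simp
qed

section \<open>The Dirichlet kernel\<close>

lemma x_cos_le_sin:
  assumes "0 \<le> x" "x \<le> pi/2"
  shows "x * cos x \<le> sin x"
proof -
  have "(\<lambda>t. sin t - t * cos t) 0 \<le> (\<lambda>t. sin t - t * cos t) x"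
  proof (rule DERIV_nonneg_imp_nondecreasing[OF assms(1)])
    fix t
    assume t: "0 \<le> t" "t \<le> x"
    have "((\<lambda>t. sin t - t * cos t) has_real_derivative t * sin t) (at t)"
      by (auto intro!: derivative_eq_intros simp: algebra_simps)
    moreover have "0 \<le> t * sin t"
      using t assms by (intro mult_nonneg_nonneg sin_ge_zero) auto
    ultimately show "\<exists>y. ((\<lambda>t. sin t - t * cos t) has_real_derivative y) (at t) \<and> 0 \<le> y"
      by blast
  qed
  then show ?thesis
    by simp
qed

lemma jordan_inequality:
  assumes "0 \<le> x" "x \<le> pi/2"
  shows "2 / pi * x \<le> sin x"
proof (cases "x = 0")
  case False
  then have x: "0 < x"
    using assms by simp
  have "(\<lambda>t. sin t / t) (pi/2) \<le> (\<lambda>t. sin t / t) x"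
  proof (rule DERIV_nonpos_imp_nonincreasing[OF assms(2)])
    fix t
    assume t: "x \<le> t" "t \<le> pi/2"
    then have "0 < t"
      using x by simp
    then have "((\<lambda>t. sin t / t) has_real_derivative (cos t * t - sin t) / t\<^sup>2) (at t)"
      by (auto intro!: derivative_eq_intros simp: power2_eq_square)
    moreover have "(cos t * t - sin t) / t\<^sup>2 \<le> 0"
      using x_cos_le_sin[of t] t \<open>0 < t\<close> by (intro divide_nonpos_pos) (auto simp: mult.commute)
    ultimately show "\<exists>y. ((\<lambda>t. sin t / t) has_real_derivative y) (at t) \<and> y \<le> 0"
      by blast
  qed
  then show ?thesis
    using x by (simp add: le_divide_eq mult.commute)
qed simp

lemma norm_one_minus_cis: "cmod (1 - cis (2 * pi * f)) = 2 * \<bar>sin (pi * f)\<bar>"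
proof -
  have "(cmod (1 - cis (2 * pi * f)))\<^sup>2 = (1 - cos (2 * pi * f))\<^sup>2 + (sin (2 * pi * f))\<^sup>2"
    by (simp add: cmod_power2)
  also have "\<dots> = 2 - 2 * cos (2 * (pi * f))"
    by (simp add: power2_eq_square algebra_simps sin_squared_eq)
  also have "\<dots> = (2 * \<bar>sin (pi * f)\<bar>)\<^sup>2"
    by (simp add: cos_double_sin power2_eq_square)
  finally show ?thesis
    using power2_eq_iff_nonneg[of "cmod (1 - cis (2 * pi * f))" "2 * \<bar>sin (pi * f)\<bar>"] by simp
qed

lemma norm_geometric_cis_sum_le:
  assumes "0 < f" "f \<le> 1/2"
  shows "cmod (\<Sum>k<M. cis (2 * pi * f) ^ k) \<le> 1 / (2 * f)"
proof -
  let ?z = "cis (2 * pi * f)"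
  have "cmod (1 - ?z) * cmod (\<Sum>k<M. ?z ^ k) = cmod (1 - ?z ^ M)"
    by (metis norm_mult one_diff_power_eq)
  also have "\<dots> \<le> 2"
    using norm_triangle_ineq4[of 1 "?z ^ M"] by (simp add: norm_power)
  finally have "cmod (1 - ?z) * cmod (\<Sum>k<M. ?z ^ k) \<le> 2" .
  moreover have "4 * f \<le> cmod (1 - ?z)"
    unfolding norm_one_minus_cis using jordan_inequality[of "pi * f"] assms by simp
  ultimately have "4 * f * cmod (\<Sum>k<M. ?z ^ k) \<le> 2"
    by (meson mult_right_mono norm_ge_zero order_trans)
  then show ?thesis
    using assms by (simp add: field_simps)
qed

section \<open>The test vector\<close>

definition boxcar_power :: "nat \<Rightarrow> nat \<Rightarrow> real poly" where
  "boxcar_power M p = (\<Sum>k<M. monom 1 k) ^ p"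

lemma degree_boxcar_power: "degree (boxcar_power M p) \<le> p * (M - 1)"
proof -
  have "degree (\<Sum>k<M. monom (1::real) k) \<le> M - 1"
    by (intro degree_sum_le) (auto simp: degree_monom_eq)
  then show ?thesis
    unfolding boxcar_power_def using degree_power_le[of "\<Sum>k<M. monom (1::real) k" p]
    by (metis le_trans mult.commute mult_le_mono1)
qed

lemma poly_eq_sum_coeff_lessThan:
  fixes P :: "'a::comm_semiring_1 poly"
  assumes "degree P < N"
  shows "poly P z = (\<Sum>i<N. coeff P i * z ^ i)"
  unfolding poly_altdef by (rule sum.mono_neutral_left) (use assms in \<open>auto simp: coeff_eq_0\<close>)

interpretation of_real_poly: map_poly_comm_ring_hom "of_real :: real \<Rightarrow> complex" ..

lemma sum_coeff_boxcar_power_power: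
  assumes "degree (boxcar_power M p) < N"
  shows "(\<Sum>n<N. of_real (coeff (boxcar_power M p) n) * z ^ n) = (\<Sum>k<M. z ^ k :: complex) ^ p"
proof -
  have "poly (map_poly of_real (boxcar_power M p)) z = (\<Sum>k<M. z ^ k) ^ p"
    unfolding boxcar_power_def of_real_poly.hom_power of_real_poly.hom_sum
    by (simp add: poly_sum poly_monom)
  moreover have "poly (map_poly of_real (boxcar_power M p)) z
      = (\<Sum>n<N. of_real (coeff (boxcar_power M p) n) * z ^ n)"
    using assms by (subst poly_eq_sum_coeff_lessThan[of _ N]) auto
  ultimately show ?thesis
    by simp
qed

lemma sum_coeff_boxcar_power:
  assumes "degree (boxcar_power M p) < N"
  shows "(\<Sum>n<N. coeff (boxcar_power M p) n) = real M ^ p"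
proof -
  have "poly (boxcar_power M p) 1 = real M ^ p"
    unfolding boxcar_power_def by (simp add: poly_sum poly_monom)
  then show ?thesis
    using poly_eq_sum_coeff_lessThan[OF assms, of 1] by simp
qed

lemma spectral_density_boxcar_power_le:
  assumes "degree (boxcar_power M p) < N" and "0 < f" "f \<le> 1/2"
  shows "spectral_density N (coeff (boxcar_power M p)) f \<le> (1 / (2 * f)) ^ (2 * p)"
proof -
  have "spectral_density N (coeff (boxcar_power M p)) f = (cmod (\<Sum>k<M. cis (2 * pi * f) ^ k)) ^ (2 * p)"
    unfolding spectral_density_eq_norm sum_coeff_boxcar_power_power[OF assms(1)]
    by (simp add: norm_power power_mult[symmetric] mult.commute)
  also have "\<dots> \<le> (1 / (2 * f)) ^ (2 * p)"
    by (intro power_mono norm_geometric_cis_sum_le assms(2,3)) simp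
  finally show ?thesis .
qed

lemma sprod_boxcar_power_ge:
  assumes "degree (boxcar_power M p) < N"
  shows "real M ^ (2 * p) / real N \<le> sprod N (coeff (boxcar_power M p)) (coeff (boxcar_power M p))"
proof -
  let ?x = "coeff (boxcar_power M p)"
  have "(real M ^ p)\<^sup>2 = (\<Sum>n<N. ?x n)\<^sup>2"
    by (simp add: sum_coeff_boxcar_power[OF assms])
  also have "\<dots> \<le> real N * sprod N ?x ?x"
    using sum_squared_le_sum_of_squares[of ?x "{..<N}"] unfolding sprod_def
    by (simp add: power2_eq_square mult.commute)
  finally show ?thesis
    using assms by (simp add: divide_le_eq power_mult[symmetric] mult.commute)
qed

section \<open>The bound on the largest eigenvalue\<close>

lemma sinc_kernel_commute: "sinc_kernel W i j = sinc_kernel W j i"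
proof -
  have "real j - real i = - (real i - real j)"
    by simp
  then show ?thesis
    unfolding sinc_kernel_def by (simp only: mult_minus_left mult_minus_right sin_minus minus_divide_divide) simp
qed

lemma dpss_kernel_carrier: "dpss_kernel N K \<in> carrier_mat N N"
  unfolding dpss_kernel_def by simp

lemma dpss_kernel_eq_sinc_kernel:
  assumes "i < N" "j < N"
  shows "dpss_kernel N K $$ (i, j) = sinc_kernel ((2 * real K + 1) / real N) i j"
  using assms unfolding dpss_kernel_def sinc_kernel_def by (simp add: times_divide_eq_right)

lemma defect_le_eps_energy:
  fixes eps W :: real and p M :: nat
  assumes eps: "0 < eps" "1 \<le> eps * 2 ^ (2 * p - 1)" and p: "1 \<le> p"
    and W: "0 < W" "2 \<le> real M * W"
  shows "1 / (real (2 * p - 1) * W ^ (2 * p - 1)) \<le> eps * (real M ^ (2 * p) / real (p * M))"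
proof -
  define k where "k = 2 * p - 1"
  have k: "1 \<le> k" "k + 1 = 2 * p" "real p \<le> real k"
    using p unfolding k_def by auto
  have M: "0 < real M"
    using W by (cases M) auto
  have "1 \<le> eps * 2 ^ k"
    using eps(2) unfolding k_def .
  also have "\<dots> \<le> eps * (real M * W) ^ k"
    using W eps(1) by (intro mult_left_mono power_mono) auto
  finally have "real p * 1 \<le> real k * (eps * (real M * W) ^ k)"
    using k(3) by (intro mult_mono) auto
  then have "1 / (real k * W ^ k) \<le> eps * real M ^ k / real p"
    using k(1) W(1) p by (simp add: field_simps power_mult_distrib)
  also have "\<dots> = eps * (real M ^ (2 * p) / real (p * M))"
  proof -
    have "real M ^ (2 * p) = real M ^ k * real M"
      using k(2) by (metis power_Suc2 Suc_eq_plus1)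
    then show ?thesis
      using M p by (simp add: field_simps)
  qed
  finally show ?thesis
    unfolding k_def .
qed

lemma dpss_bandwidth_bounds:
  fixes p M :: nat
  assumes p: "1 \<le> p" and M: "4 \<le> M"
  defines "W \<equiv> (2 * real (2 * p - 1) + 1) / real (p * M)"
  shows "0 < W" and "W \<le> 1" and "2 \<le> real M * W"
proof -
  have W_eq: "W = (4 * real p - 1) / (real p * real M)"
    using p unfolding W_def by (simp add: of_nat_diff)
  have "real p * 4 \<le> real p * real M"
    using M by (intro mult_left_mono) auto
  then have "4 * real p - 1 \<le> real p * real M"
    by linarith
  then show "0 < W" "W \<le> 1" "2 \<le> real M * W"
    using p M unfolding W_eq by (simp_all only: divide_le_eq_1) (auto simp: field_simps)
qed

theorem lambda_max_dpss_kernel_ge: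
  fixes eps :: real and p M :: nat
  assumes eps: "0 < eps" "1 \<le> eps * 2 ^ (2 * p - 1)" and p: "1 \<le> p" and M: "4 \<le> M"
  shows "1 - eps \<le> lambda_max (dpss_kernel (p * M) (2 * p - 1))"
proof -
  define N K where "N = p * M" and "K = 2 * p - 1"
  define W where "W = (2 * real K + 1) / real N"
  define x where "x = coeff (boxcar_power M p)"
  have "p * (M - 1) < p * M"
    using p M by simp
  then have deg: "degree (boxcar_power M p) < N"
    using degree_boxcar_power[of M p] unfolding N_def by linarith
  have W: "0 < W" "W \<le> 1" "2 \<le> real M * W"
    using dpss_bandwidth_bounds[OF p M] unfolding W_def N_def K_def by auto
  have "0 < real M ^ (2 * p) / real N"
    using deg M by (simp add: gr_zeroI)
  then have energy: "0 < sprod N x x"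
    using sprod_boxcar_power_ge[OF deg] unfolding x_def by linarith
  have "sprod N x x - bilin N (sinc_kernel W) x x \<le> 1 / (real K * W ^ K)"
    unfolding x_def K_def
    by (rule sprod_minus_sinc_form_le[OF W(1,2) p spectral_density_boxcar_power_le[OF deg]]) (use W in auto)
  also have "\<dots> \<le> eps * (real M ^ (2 * p) / real N)"
    unfolding K_def N_def by (rule defect_le_eps_energy[OF eps p W(1,3)])
  also have "\<dots> \<le> eps * sprod N x x"
    unfolding x_def using eps(1) by (intro mult_left_mono sprod_boxcar_power_ge[OF deg]) simp
  finally have "1 - eps \<le> bilin N (sinc_kernel W) x x / sprod N x x"
    using energy by (simp add: le_divide_eq algebra_simps)
  also have "bilin N (sinc_kernel W) x x = bilin N (\<lambda>i j. dpss_kernel N K $$ (i, j)) x x"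
    unfolding bilin_def W_def by (intro sum.cong refl) (simp add: dpss_kernel_eq_sinc_kernel)
  also have "\<dots> / sprod N x x \<le> lambda_max (dpss_kernel N K)"
    by (rule rayleigh_quotient_le_lambda_max[OF dpss_kernel_carrier])
      (use energy in \<open>auto simp: dpss_kernel_eq_sinc_kernel sinc_kernel_commute\<close>)
  finally show ?thesis
    unfolding N_def K_def .
qed

section \<open>The choice of the parameters\<close>

lemma ln_2_ge_half: "1/2 \<le> ln (2::real)"
proof -
  have "(exp (1/2::real))\<^sup>2 = exp 1"
    by (simp add: power2_eq_square flip: exp_add)
  then have "(exp (1/2::real))\<^sup>2 \<le> 2\<^sup>2"
    using exp_le by simp
  then have "exp (1/2::real) \<le> 2"
    by (rule power2_le_imp_le) simp
  then show ?thesis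
    by (metis exp_gt_zero exp_le_cancel_iff exp_ln zero_less_numeral)
qed

lemma one_le_mult_two_power:
  fixes eps :: real
  assumes "0 < eps" and "- ln eps \<le> real k / 2"
  shows "1 \<le> eps * 2 ^ k"
proof -
  have "- ln eps \<le> real k * ln 2"
    using assms(2) mult_left_mono[OF ln_2_ge_half, of "real k"] by simp
  then have "exp (- ln eps) \<le> exp (real k * ln 2)"
    by simp
  then have "1 / eps \<le> 2 ^ k"
    using assms(1) by (simp add: exp_minus exp_of_nat_mult divide_inverse)
  then show ?thesis
    using assms(1) by (simp add: divide_le_eq mult.commute)
qed

lemma choice_of_m:
  fixes eps :: real
  assumes eps: "0 < eps" "eps < 1"
  defines "m \<equiv> nat (\<lceil>log 2 (real_of_int (\<lceil>175 * (ln (10 / eps) + 1) ^ 2\<rceil>) + 1)\<rceil> + 1)"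
  shows "2 \<le> m" and "1 \<le> eps * 2 ^ (2 ^ (m - 1) - 1)"
proof -
  define L where "L = ln (10 / eps)"
  define X where "X = real_of_int \<lceil>175 * (L + 1) ^ 2\<rceil> + 1"
  have L: "0 \<le> L" "- ln eps \<le> L"
    unfolding L_def using eps by (simp_all add: ln_div)
  have X: "175 * (L + 1)\<^sup>2 + 1 \<le> X"
    unfolding X_def by linarith
  moreover have "1 \<le> (L + 1)\<^sup>2"
    using L by simp
  ultimately have "1 \<le> log 2 X"
    by (simp add: le_log_iff)
  then have c: "1 \<le> \<lceil>log 2 X\<rceil>" and m: "m - 1 = nat \<lceil>log 2 X\<rceil>"
    unfolding m_def L_def[symmetric] X_def[symmetric] by linarith+
  then show "2 \<le> m"
    by linarith
  have "X = 2 powr (log 2 X)"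
    using X \<open>1 \<le> (L + 1)\<^sup>2\<close> by simp
  also have "\<dots> \<le> 2 powr (real_of_int \<lceil>log 2 X\<rceil>)"
    by (intro powr_mono) auto
  also have "\<dots> = 2 ^ nat \<lceil>log 2 X\<rceil>"
    using c powr_realpow[of 2 "nat \<lceil>log 2 X\<rceil>"] by simp
  finally have "X \<le> 2 ^ (m - 1)"
    unfolding m .
  then have "175 * (L + 1)\<^sup>2 \<le> real (2 ^ (m - 1) - 1)"
    using X by (simp add: of_nat_diff)
  moreover have "L + 1 \<le> (L + 1)\<^sup>2"
    using L by (simp add: power2_eq_square)
  ultimately have "- ln eps \<le> real (2 ^ (m - 1) - 1) / 2"
    using L by linarith
  then show "1 \<le> eps * 2 ^ (2 ^ (m - 1) - 1)"
    by (rule one_le_mult_two_power[OF eps(1)])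
qed

theorem theorem2:
  fixes eps :: real and l :: nat
  assumes "0 < eps" and "eps < 1"
  defines "m \<equiv> nat (\<lceil>log 2 (real_of_int (\<lceil>175 * (ln (10 / eps) + 1) ^ 2\<rceil>) + 1)\<rceil> + 1)"
  defines "N \<equiv> (2::nat) ^ (l + m)"
  defines "K \<equiv> (2::nat) ^ (m - 1) - 1"
  shows "lambda_max (dpss_kernel N K) \<ge> 1 - eps"
proof -
  have "2 \<le> m" and eps_K: "1 \<le> eps * 2 ^ K"
    using choice_of_m[OF assms(1,2)] unfolding m_def K_def by simp_all
  then obtain q where q: "m = q + 2"
    using le_Suc_ex by (metis add.commute)
  define p M where "p = (2::nat) ^ q" and "M = (2::nat) ^ (l + 2)"
  have "N = p * M" and "K = 2 * p - 1"
    unfolding N_def K_def p_def M_def q by (simp_all flip: power_add add: algebra_simps)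
  moreover have "1 \<le> p" and "4 \<le> M"
    unfolding p_def M_def by (simp_all add: power_add)
  ultimately show ?thesis
    using lambda_max_dpss_kernel_ge[OF assms(1)] eps_K by simp
qed

end
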